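(* For any hypergraph PIN model on a $t$-uniform hypergraph $\mathcal H=(\mathcal M,\mathcal E)$, any $n\in\mathbb N$, and any function $\mathbf L$ of $X^n_{\mathcal M}$, $$\sum_{i=1}^m I(X_i^n;\mathbf L)\le t\,H(\mathbf L).$$
   Context: Let $\mathcal M=\{1,\dots,m\}$. A hypergraph PIN model is defined from a hypergraph $\mathcal H=(\mathcal M,\mathcal E)$, where $\mathcal E$ is a finite multiset of subsets (hyperedges) of $\mathcal M$. For $n\in\mathbb N$, $\mathcal E^{(n)}$ is the multiset with $n$ copies of each element of $\mathcal E$. Each $e\in\mathcal E^{(n)}$ carries an independent Bernoulli(1/2) random variable $\xi_e$, and $X^n_i=(\xi_e:e\in\mathcal E^{(n)},\ i\in e)$, with $X^n_{\mathcal M}=(X^n_1,\dots,X^n_m)$. $\mathcal H$ is $t$-uniform if every hyperedge has exactly $t$ elements. *)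

theory Defs
  imports "HOL-Probability.Probability"
begin

(* A hypergraph on vertex set {1..m} is given by a list E of hyperedges
   (a list represents the finite multiset of hyperedges; order is irrelevant,
   repeated entries are distinct hyperedges).
   The multiset E^(n) consists of the pairs (j,k) with j < length E, k < n:
   (j,k) is the k-th copy of the hyperedge E!j. *)

definition is_hypergraph :: "nat \<Rightarrow> nat set list \<Rightarrow> bool" where
  "is_hypergraph m E \<longleftrightarrow> (\<forall>e\<in>set E. e \<subseteq> {1..m})"

definition t_uniform :: "nat \<Rightarrow> nat set list \<Rightarrow> bool" where
  "t_uniform t E \<longleftrightarrow> (\<forall>e\<in>set E. card e = t)"

definition pin_edges :: "nat set list \<Rightarrow> nat \<Rightarrow> (nat \<times> nat) set" where
  "pin_edges E n = {0..<length E} \<times> {0..<n}"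

definition pin_space :: "nat set list \<Rightarrow> nat \<Rightarrow> ((nat \<times> nat) \<Rightarrow> bool) measure" where
  "pin_space E n = measure_pmf (Pi_pmf (pin_edges E n) False (\<lambda>_. bernoulli_pmf (1/2)))"

definition pin_X :: "nat set list \<Rightarrow> nat \<Rightarrow> nat \<Rightarrow> ((nat \<times> nat) \<Rightarrow> bool) \<Rightarrow> ((nat \<times> nat) \<Rightarrow> bool)" where
  "pin_X E n i \<xi> = restrict \<xi> {(j, k) \<in> pin_edges E n. i \<in> E ! j}"

definition pin_XM :: "nat set list \<Rightarrow> nat \<Rightarrow> nat \<Rightarrow> ((nat \<times> nat) \<Rightarrow> bool) \<Rightarrow> (nat \<Rightarrow> (nat \<times> nat) \<Rightarrow> bool)" where
  "pin_XM E n m \<xi> = (\<lambda>i\<in>{1..m}. pin_X E n i \<xi>)"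

end

theory Submission
  imports Defs
begin

text \<open>
  Write \<open>\<xi>_S\<close> for the bits on a set \<open>S\<close> of hyperedge copies, \<open>A_i\<close> for the copies containing
  vertex \<open>i\<close>, \<open>D\<close> for all copies, and \<open>G S = H(L, \<xi>_S)\<close>. Submodularity of entropy makes \<open>G\<close>
  submodular, and since each copy lies in exactly \<open>t\<close> of the sets \<open>A_i\<close>, a Shearer-type induction
  gives \<open>t (G D - G {}) \<le> (\<Sum>i. G A_i - G {})\<close>. As \<open>L\<close> is a function of \<open>\<xi>_D\<close>, \<open>G D = H(\<xi>_D) = |D|\<close>
  and \<open>G {} = H(L)\<close>; moreover \<open>I(X_i; L) = H(X_i) + H(L) - G A_i\<close> and \<open>H(X_i) \<le> |A_i|\<close>.
  Summing over \<open>i\<close>, the bit entropies cancel because \<open>\<Sum>i. |A_i| = t |D|\<close>.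
\<close>

lemma log_ratio_split:
  fixes a p q r c :: real
  assumes "0 \<le> a" "a \<le> p" "a \<le> q" "a \<le> r"
  shows "a * log c (a / (p * (q / r))) = a * log c a - a * log c p - a * log c q + a * log c r"
  using assms by (cases "a = 0") (simp_all add: log_divide log_mult algebra_simps)

lemma (in prob_space) sum_prob_vimage_compose:
  assumes F: "simple_function M F" and G: "\<And>w. G w = \<phi> (F w)"
  shows "(\<Sum>v\<in>F`space M. prob (F -` {v} \<inter> space M) * h (\<phi> v))
       = (\<Sum>u\<in>G`space M. prob (G -` {u} \<inter> space M) * h u)"
proof -
  have fin: "finite (F`space M)" using F by (rule simple_functionD)
  have prob_G: "prob (G -` {u} \<inter> space M) = (\<Sum>v\<in>{v\<in>F`space M. \<phi> v = u}. prob (F -` {v} \<inter> space M))"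
    for u
  proof -
    have "G -` {u} \<inter> space M = (\<Union>v\<in>{v\<in>F`space M. \<phi> v = u}. F -` {v} \<inter> space M)"
      using G by auto
    also have "prob \<dots> = (\<Sum>v\<in>{v\<in>F`space M. \<phi> v = u}. prob (F -` {v} \<inter> space M))"
      using fin F by (intro finite_measure_finite_Union) (auto simp: disjoint_family_on_def intro: simple_functionD(2))
    finally show ?thesis .
  qed
  have "(\<Sum>v\<in>F`space M. prob (F -` {v} \<inter> space M) * h (\<phi> v))
      = (\<Sum>u\<in>\<phi>`F`space M. \<Sum>v\<in>{v\<in>F`space M. \<phi> v = u}. prob (F -` {v} \<inter> space M) * h (\<phi> v))"
    by (rule sum.image_gen[OF fin])
  also have "\<dots> = (\<Sum>u\<in>\<phi>`F`space M. prob (G -` {u} \<inter> space M) * h u)"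
    unfolding prob_G sum_distrib_right by (intro sum.cong refl) auto
  also have "\<phi>`F`space M = G`space M"
    using G by (auto simp: image_image)
  finally show ?thesis .
qed

lemma (in prob_space) prob_vimage_le_compose:
  assumes F: "simple_function M F" and G: "simple_function M G" and GF: "\<And>w. G w = \<phi> (F w)"
    and w: "w \<in> space M"
  shows "prob (F -` {F w} \<inter> space M) \<le> prob (G -` {G w} \<inter> space M)"
  using F G w by (intro finite_measure_mono) (auto simp: GF intro: simple_functionD(2))

lemma (in information_space) entropy_simple_function:
  assumes "simple_function M X"
  shows "\<H>(X) = - (\<Sum>v\<in>X`space M. prob (X -` {v} \<inter> space M) * log b (prob (X -` {v} \<inter> space M)))"
  by (rule entropy_simple_distributed[OF simple_distributedI[OF assms measure_nonneg refl]])

lemma (in information_space) entropy_eq_sum_compose: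
  assumes F: "simple_function M F" and G: "\<And>w. G w = \<phi> (F w)"
  shows "\<H>(G) = - (\<Sum>v\<in>F`space M. prob (F -` {v} \<inter> space M) * log b (prob (G -` {\<phi> v} \<inter> space M)))"
proof -
  have "G = \<phi> \<circ> F"
    using G by (simp add: fun_eq_iff)
  then have "simple_function M G"
    using F by simp
  moreover have "(\<Sum>v\<in>F`space M. prob (F -` {v} \<inter> space M) * log b (prob (G -` {\<phi> v} \<inter> space M)))
      = (\<Sum>u\<in>G`space M. prob (G -` {u} \<inter> space M) * log b (prob (G -` {u} \<inter> space M)))"
    by (rule sum_prob_vimage_compose[OF F]) (rule G)
  ultimately show ?thesis
    by (simp add: entropy_simple_function)
qed

lemma (in information_space) conditional_mutual_information_eq_entropies:
  assumes X: "simple_function M X" and Y: "simple_function M Y" and Z: "simple_function M Z"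
  shows "\<I>(X ; Y | Z) = \<H>(\<lambda>w. (X w, Z w)) + \<H>(\<lambda>w. (Y w, Z w)) - \<H>(\<lambda>w. (X w, Y w, Z w)) - \<H>(Z)"
proof -
  let ?T = "\<lambda>w. (X w, Y w, Z w)" and ?XZ = "\<lambda>w. (X w, Z w)" and ?YZ = "\<lambda>w. (Y w, Z w)"
  have T: "simple_function M ?T" and XZ: "simple_function M ?XZ" and YZ: "simple_function M ?YZ"
    using X Y Z by (auto intro: simple_function_Pair)
  define Pxyz where "Pxyz v = prob (?T -` {v} \<inter> space M)" for v
  define Pxz where "Pxz v = prob (?XZ -` {v} \<inter> space M)" for v
  define Pyz where "Pyz v = prob (?YZ -` {v} \<inter> space M)" for v
  define Pz where "Pz v = prob (Z -` {v} \<inter> space M)" for v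
  note distr = simple_distributedI[OF _ measure_nonneg refl]
  have summand_split: "Pxyz v * log b (Pxyz v / (Pxz (x, z) * (Pyz (y, z) / Pz z))) =
      Pxyz v * log b (Pxyz v) - Pxyz v * log b (Pxz (x, z)) - Pxyz v * log b (Pyz (y, z))
      + Pxyz v * log b (Pz z)"
    if "v \<in> ?T`space M" "v = (x, y, z)" for v x y z
  proof -
    from that obtain w where w: "w \<in> space M" "v = ?T w" "x = X w" "y = Y w" "z = Z w" by auto
    show ?thesis
      unfolding Pxyz_def Pxz_def Pyz_def Pz_def w
      using prob_vimage_le_compose[OF T XZ _ w(1), of "\<lambda>(x, y, z). (x, z)"]
        prob_vimage_le_compose[OF T YZ _ w(1), of "\<lambda>(x, y, z). (y, z)"]
        prob_vimage_le_compose[OF T Z _ w(1), of "\<lambda>(x, y, z). z"]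
      by (intro log_ratio_split measure_nonneg) auto
  qed
  have "\<I>(X ; Y | Z) = (\<Sum>(x, y, z)\<in>?T`space M.
      Pxyz (x, y, z) * log b (Pxyz (x, y, z) / (Pxz (x, z) * (Pyz (y, z) / Pz z))))"
    unfolding Pxyz_def Pxz_def Pyz_def Pz_def
    by (rule conditional_mutual_information_eq[OF distr[OF Z] distr[OF YZ] distr[OF XZ] distr[OF T]])
  also have "\<dots> = (\<Sum>v\<in>?T`space M. Pxyz v * log b (Pxyz v))
     - (\<Sum>v\<in>?T`space M. Pxyz v * log b (Pxz (fst v, snd (snd v))))
     - (\<Sum>v\<in>?T`space M. Pxyz v * log b (Pyz (fst (snd v), snd (snd v))))
     + (\<Sum>v\<in>?T`space M. Pxyz v * log b (Pz (snd (snd v))))"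
    unfolding sum_subtractf[symmetric] sum.distrib[symmetric]
    by (intro sum.cong refl) (auto simp only: prod.case fst_conv snd_conv intro!: summand_split)
  also have "(\<Sum>v\<in>?T`space M. Pxyz v * log b (Pxyz v)) = - \<H>(?T)"
    using entropy_eq_sum_compose[OF T, of ?T id] by (simp add: Pxyz_def)
  also have "(\<Sum>v\<in>?T`space M. Pxyz v * log b (Pxz (fst v, snd (snd v)))) = - \<H>(?XZ)"
    using entropy_eq_sum_compose[OF T, of ?XZ "\<lambda>v. (fst v, snd (snd v))"] by (simp add: Pxyz_def Pxz_def)
  also have "(\<Sum>v\<in>?T`space M. Pxyz v * log b (Pyz (fst (snd v), snd (snd v)))) = - \<H>(?YZ)"
    using entropy_eq_sum_compose[OF T, of ?YZ "\<lambda>v. (fst (snd v), snd (snd v))"] by (simp add: Pxyz_def Pyz_def)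
  also have "(\<Sum>v\<in>?T`space M. Pxyz v * log b (Pz (snd (snd v)))) = - \<H>(Z)"
    using entropy_eq_sum_compose[OF T, of Z "\<lambda>v. snd (snd v)"] by (simp add: Pxyz_def Pz_def)
  finally show ?thesis by simp
qed

corollary (in information_space) entropy_submodular:
  assumes "simple_function M X" "simple_function M Y" "simple_function M Z"
  shows "\<H>(\<lambda>w. (X w, Y w, Z w)) + \<H>(Z) \<le> \<H>(\<lambda>w. (X w, Z w)) + \<H>(\<lambda>w. (Y w, Z w))"
  using conditional_mutual_information_nonneg[OF assms] conditional_mutual_information_eq_entropies[OF assms]
  by simp

lemma (in information_space) entropy_eq_of_inverse:
  assumes X: "simple_function M X" and f: "\<And>w. Y w = f (X w)"
    and h: "\<And>w. w \<in> space M \<Longrightarrow> X w = h (Y w)"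
  shows "\<H>(Y) = \<H>(X)"
proof -
  have "Y = f \<circ> X" by (rule ext) (simp add: f)
  moreover have "inj_on f (X`space M)"
    by (rule inj_onI) (metis f h image_iff)
  ultimately show ?thesis using entropy_of_inj[OF X] by simp
qed

lemma (in information_space) mutual_information_eq_entropies:
  assumes X: "simple_function M X" and Y: "simple_function M Y"
  shows "\<I>(X ; Y) = \<H>(X) + \<H>(Y) - \<H>(\<lambda>w. (Y w, X w))"
  using mutual_information_eq_entropy_conditional_entropy[OF X Y] entropy_chain_rule[OF Y X] by simp

lemma submodular_sum_cover_le:
  fixes G :: "'a set \<Rightarrow> real" and A :: "'i \<Rightarrow> 'a set"
  assumes "finite D" "finite I"
    and "\<And>S T. S \<subseteq> D \<Longrightarrow> T \<subseteq> D \<Longrightarrow> G (S \<union> T) + G (S \<inter> T) \<le> G S + G T"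
    and "\<And>i. i \<in> I \<Longrightarrow> A i \<subseteq> D" and "\<And>d. d \<in> D \<Longrightarrow> card {i\<in>I. d \<in> A i} = t"
  shows "real t * (G D - G {}) \<le> (\<Sum>i\<in>I. G (A i) - G {})"
  using assms(1,3-5)
proof (induction D arbitrary: A rule: finite_induct)
  case empty
  then show ?case by auto
next
  case (insert d F)
  define A' where "A' i = A i - {d}" for i
  have IH: "real t * (G F - G {}) \<le> (\<Sum>i\<in>I. G (A' i) - G {})"
  proof (rule insert.IH)
    show "G (S \<union> T) + G (S \<inter> T) \<le> G S + G T" if "S \<subseteq> F" "T \<subseteq> F" for S T
      using insert.prems(1) that by blast
    show "A' i \<subseteq> F" if "i \<in> I" for i
      using insert.prems(2)[OF that] by (auto simp: A'_def)
    show "card {i \<in> I. d' \<in> A' i} = t" if "d' \<in> F" for d'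
    proof -
      have "{i \<in> I. d' \<in> A' i} = {i \<in> I. d' \<in> A i}" using that insert.hyps by (auto simp: A'_def)
      then show ?thesis using insert.prems(3) that by simp
    qed
  qed
  have step: "(if d \<in> A i then G (insert d F) - G F else 0) \<le> G (A i) - G (A' i)" if i: "i \<in> I" for i
  proof (cases "d \<in> A i")
    case True
    have "A i \<union> F = insert d F" "A i \<inter> F = A' i"
      using True insert.prems(2)[OF i] insert.hyps by (auto simp: A'_def)
    moreover have "G (A i \<union> F) + G (A i \<inter> F) \<le> G (A i) + G F"
      using insert.prems(1)[of "A i" F] insert.prems(2)[OF i] by auto
    ultimately show ?thesis using True by simp
  qed (simp add: A'_def)
  have "real t * (G (insert d F) - G F) = (\<Sum>i\<in>I. if d \<in> A i then G (insert d F) - G F else 0)"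
    using insert.prems(3)[of d] assms(2) by (simp add: sum.If_cases Collect_conj_eq Int_commute)
  also have "\<dots> \<le> (\<Sum>i\<in>I. G (A i) - G (A' i))"
    using step by (rule sum_mono)
  finally show ?case
    using IH by (simp add: sum_subtractf algebra_simps)
qed

lemma sum_card_regular_cover:
  assumes "finite D" "finite I" "\<And>i. i \<in> I \<Longrightarrow> A i \<subseteq> D"
    and "\<And>d. d \<in> D \<Longrightarrow> card {i\<in>I. d \<in> A i} = t"
  shows "(\<Sum>i\<in>I. card (A i)) = t * card D"
proof -
  have "(\<Sum>i\<in>I. card (A i)) = (\<Sum>i\<in>I. \<Sum>d\<in>D. of_bool (d \<in> A i))"
    using assms(1,3) by (intro sum.cong refl) (simp add: Int_absorb1 Int_commute)
  also have "\<dots> = (\<Sum>d\<in>D. \<Sum>i\<in>I. of_bool (d \<in> A i))"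
    by (rule sum.swap)
  also have "\<dots> = (\<Sum>d\<in>D. t)"
    using assms(2,4) by (intro sum.cong refl) (simp add: Int_def)
  finally show ?thesis by simp
qed

lemma (in information_space) entropy_restrict_submodular:
  fixes \<xi> :: "'a \<Rightarrow> 'd \<Rightarrow> 'v"
  assumes L: "simple_function M L"
    and S: "simple_function M (\<lambda>\<omega>. restrict (\<xi> \<omega>) S)" and T: "simple_function M (\<lambda>\<omega>. restrict (\<xi> \<omega>) T)"
  shows "\<H>(\<lambda>\<omega>. (L \<omega>, restrict (\<xi> \<omega>) (S \<union> T))) + \<H>(\<lambda>\<omega>. (L \<omega>, restrict (\<xi> \<omega>) (S \<inter> T)))
    \<le> \<H>(\<lambda>\<omega>. (L \<omega>, restrict (\<xi> \<omega>) S)) + \<H>(\<lambda>\<omega>. (L \<omega>, restrict (\<xi> \<omega>) T))"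
proof -
  let ?Z = "\<lambda>\<omega>. (L \<omega>, restrict (\<xi> \<omega>) (S \<inter> T))"
  have "simple_function M (\<lambda>\<omega>. restrict (\<xi> \<omega>) (S \<inter> T))"
    using simple_function_compose[OF S, of "\<lambda>u. restrict u (S \<inter> T)"] by (simp add: comp_def Int_left_absorb)
  then have Z: "simple_function M ?Z"
    using L by (rule simple_function_Pair[rotated])
  have ST: "\<H>(\<lambda>\<omega>. (L \<omega>, restrict (\<xi> \<omega>) (S \<union> T)))
      = \<H>(\<lambda>\<omega>. (restrict (\<xi> \<omega>) S, restrict (\<xi> \<omega>) T, ?Z \<omega>))"
    by (rule entropy_eq_of_inverse[where f="\<lambda>(a, c, l, _). (l, \<lambda>x. if x \<in> S then a x else c x)"
          and h="\<lambda>(l, u). (restrict u S, restrict u T, l, restrict u (S \<inter> T))"])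
       (auto intro!: simple_function_Pair S T Z simp: fun_eq_iff)
  have "\<H>(\<lambda>\<omega>. (L \<omega>, restrict (\<xi> \<omega>) U)) = \<H>(\<lambda>\<omega>. (restrict (\<xi> \<omega>) U, ?Z \<omega>))"
    if U: "simple_function M (\<lambda>\<omega>. restrict (\<xi> \<omega>) U)" "S \<inter> T \<subseteq> U" for U
    by (rule entropy_eq_of_inverse[where f="\<lambda>(a, l, _). (l, a)" and h="\<lambda>(l, u). (u, l, restrict u (S \<inter> T))"])
       (use U in \<open>auto intro!: simple_function_Pair Z simp: fun_eq_iff\<close>)
  from this[OF S] this[OF T] ST show ?thesis
    using entropy_submodular[OF S T Z] by simp
qed

lemma (in information_space) sum_mutual_information_restrict_le:
  fixes \<xi> :: "'a \<Rightarrow> 'd \<Rightarrow> 'v" and A :: "'i \<Rightarrow> 'd set"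
  assumes D: "finite D" and I: "finite I" and A: "\<And>i. i \<in> I \<Longrightarrow> A i \<subseteq> D"
    and cover: "\<And>d. d \<in> D \<Longrightarrow> card {i\<in>I. d \<in> A i} = t"
    and sf: "\<And>S. S \<subseteq> D \<Longrightarrow> simple_function M (\<lambda>\<omega>. restrict (\<xi> \<omega>) S)"
    and L: "\<And>\<omega>. L \<omega> = f (restrict (\<xi> \<omega>) D)"
  shows "(\<Sum>i\<in>I. \<I>(\<lambda>\<omega>. restrict (\<xi> \<omega>) (A i) ; L)) + real t * \<H>(\<lambda>\<omega>. restrict (\<xi> \<omega>) D)
    \<le> real t * \<H>(L) + (\<Sum>i\<in>I. \<H>(\<lambda>\<omega>. restrict (\<xi> \<omega>) (A i)))"
proof -
  have sfL: "simple_function M L"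
    using simple_function_compose[OF sf[OF order_refl], of f] by (simp add: comp_def L[symmetric])
  define G where "G S = \<H>(\<lambda>\<omega>. (L \<omega>, restrict (\<xi> \<omega>) S))" for S
  have "real t * (G D - G {}) \<le> (\<Sum>i\<in>I. G (A i) - G {})"
    using D I _ A cover
  proof (rule submodular_sum_cover_le)
    show "G (S \<union> T) + G (S \<inter> T) \<le> G S + G T" if "S \<subseteq> D" "T \<subseteq> D" for S T
      unfolding G_def using that by (intro entropy_restrict_submodular sfL sf)
  qed
  moreover have "G D = \<H>(\<lambda>\<omega>. restrict (\<xi> \<omega>) D)"
    unfolding G_def
    by (rule entropy_eq_of_inverse[where f="\<lambda>u. (f u, u)" and h=snd]) (auto intro!: sf simp: L)
  moreover have "G {} = \<H>(L)"
    unfolding G_def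
    by (rule entropy_eq_of_inverse[where f="\<lambda>l. (l, \<lambda>_. undefined)" and h=fst]) (auto intro!: sfL)
  moreover have "(\<Sum>i\<in>I. \<I>(\<lambda>\<omega>. restrict (\<xi> \<omega>) (A i) ; L))
      = (\<Sum>i\<in>I. \<H>(\<lambda>\<omega>. restrict (\<xi> \<omega>) (A i)) + \<H>(L) - G (A i))"
    unfolding G_def by (intro sum.cong refl mutual_information_eq_entropies sfL sf A)
  ultimately show ?thesis
    by (simp add: sum_subtractf sum.distrib algebra_simps)
qed

lemma (in information_space) entropy_restrict_bool_le:
  fixes \<xi> :: "'a \<Rightarrow> 'd \<Rightarrow> bool"
  assumes sf: "simple_function M (\<lambda>\<omega>. restrict (\<xi> \<omega>) S)" and S: "finite S"
  shows "\<H>(\<lambda>\<omega>. restrict (\<xi> \<omega>) S) \<le> card S * log b 2"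
proof -
  let ?img = "(\<lambda>\<omega>. restrict (\<xi> \<omega>) S) ` space M"
  have "?img \<subseteq> PiE S (\<lambda>_. UNIV)" by auto
  then have "card ?img \<le> card (PiE S (\<lambda>_. UNIV :: bool set))"
    using S by (intro card_mono finite_PiE) auto
  also have "card (PiE S (\<lambda>_. UNIV :: bool set)) = 2 ^ card S"
    using S by (simp add: card_PiE)
  finally have "real (card ?img) \<le> 2 ^ card S"
    by (metis of_nat_le_iff of_nat_numeral of_nat_power)
  moreover have "0 < card ?img"
    using sf not_empty by (simp add: card_gt_0_iff simple_functionD(1))
  ultimately have "log b (card ?img) \<le> log b (2 ^ card S)"
    using b_gt_1 by (simp add: log_le_cancel_iff)
  then show ?thesis
    using entropy_le_card[OF simple_distributedI[OF sf measure_nonneg refl]] by (simp add: log_nat_power)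
qed

lemma (in information_space) entropy_equiprobable:
  assumes X: "simple_function M X" and p: "\<And>w. w \<in> space M \<Longrightarrow> prob (X -` {X w} \<inter> space M) = p"
  shows "\<H>(X) = - log b p"
proof -
  have "(\<Sum>v\<in>X`space M. prob (X -` {v} \<inter> space M)) = 1"
    by (rule simple_distributed_sum_space[OF simple_distributedI[OF X measure_nonneg refl]])
  then have "(\<Sum>v\<in>X`space M. p) = 1"
    using p by (smt (verit) imageE sum.cong)
  moreover have "\<H>(X) = - (\<Sum>v\<in>X`space M. p * log b p)"
    unfolding entropy_simple_function[OF X] using p by (intro arg_cong[where f=uminus] sum.cong) auto
  ultimately show ?thesis by simp
qed

lemma (in information_space) sum_mutual_information_uniform_bits_le:
  fixes \<xi> :: "'a \<Rightarrow> 'd \<Rightarrow> bool" and A :: "'i \<Rightarrow> 'd set"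
  assumes D: "finite D" and I: "finite I" and A: "\<And>i. i \<in> I \<Longrightarrow> A i \<subseteq> D"
    and cover: "\<And>d. d \<in> D \<Longrightarrow> card {i\<in>I. d \<in> A i} = t"
    and sf: "\<And>S. S \<subseteq> D \<Longrightarrow> simple_function M (\<lambda>\<omega>. restrict (\<xi> \<omega>) S)"
    and uniform: "\<And>w. w \<in> space M \<Longrightarrow>
      prob ((\<lambda>\<omega>. restrict (\<xi> \<omega>) D) -` {restrict (\<xi> w) D} \<inter> space M) = (1/2) ^ card D"
    and L: "\<And>\<omega>. L \<omega> = f (restrict (\<xi> \<omega>) D)"
  shows "(\<Sum>i\<in>I. \<I>((\<lambda>\<omega>. restrict (\<xi> \<omega>) (A i)) ; L)) \<le> real t * \<H>(L)"
proof -
  have "(\<Sum>i\<in>I. \<I>((\<lambda>\<omega>. restrict (\<xi> \<omega>) (A i)) ; L)) + real t * \<H>(\<lambda>\<omega>. restrict (\<xi> \<omega>) D)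
      \<le> real t * \<H>(L) + (\<Sum>i\<in>I. \<H>(\<lambda>\<omega>. restrict (\<xi> \<omega>) (A i)))"
    using D I A cover sf L by (rule sum_mutual_information_restrict_le)
  moreover have "(\<Sum>i\<in>I. \<H>(\<lambda>\<omega>. restrict (\<xi> \<omega>) (A i))) \<le> (\<Sum>i\<in>I. card (A i) * log b 2)"
    using sf[OF A] finite_subset[OF A D] by (intro sum_mono entropy_restrict_bool_le)
  moreover have "(\<Sum>i\<in>I. card (A i)) = t * card D"
    using D I A cover by (rule sum_card_regular_cover)
  moreover have "\<H>(\<lambda>\<omega>. restrict (\<xi> \<omega>) D) = card D * log b 2"
    using entropy_equiprobable[OF sf[OF order_refl] uniform]
    by (simp add: log_nat_power log_divide)
  ultimately show ?thesis
    by (simp add: sum_distrib_right[symmetric] flip: of_nat_sum)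
qed

definition pin_incident :: "nat set list \<Rightarrow> nat \<Rightarrow> nat \<Rightarrow> (nat \<times> nat) set" where
  "pin_incident E n i = {(j, k) \<in> pin_edges E n. i \<in> E ! j}"

lemma pin_X_eq_restrict: "pin_X E n i = (\<lambda>\<omega>. restrict \<omega> (pin_incident E n i))"
  by (simp add: pin_X_def pin_incident_def fun_eq_iff)

lemma pin_XM_restrict_pin_edges: "pin_XM E n m (restrict \<omega> (pin_edges E n)) = pin_XM E n m \<omega>"
  by (auto simp: pin_XM_def pin_X_def fun_eq_iff)

lemma card_pin_incident:
  assumes "is_hypergraph m E" "t_uniform t E" "d \<in> pin_edges E n"
  shows "card {i \<in> {1..m}. d \<in> pin_incident E n i} = t"
proof -
  obtain j k where d: "d = (j, k)" and j: "j < length E"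
    using assms(3) by (cases d) (auto simp: pin_edges_def)
  then have "E ! j \<subseteq> {1..m}" "card (E ! j) = t"
    using assms(1,2) nth_mem[OF j] by (auto simp: is_hypergraph_def t_uniform_def)
  moreover have "{i \<in> {1..m}. d \<in> pin_incident E n i} = {1..m} \<inter> E ! j"
    using assms(3) by (auto simp: pin_incident_def d)
  ultimately show ?thesis by (simp add: Int_absorb1)
qed

lemma information_space_pin_space: "information_space (pin_space E n) 2"
  by (simp add: pin_space_def information_space_def information_space_axioms_def prob_space_measure_pmf)

lemma space_pin_space [simp]: "space (pin_space E n) = UNIV"
  by (simp add: pin_space_def)

lemma simple_function_pin_restrict:
  assumes "finite S"
  shows "simple_function (pin_space E n) (\<lambda>\<omega>. restrict \<omega> S)"
proof -
  have "finite (range (\<lambda>\<omega> :: nat \<times> nat \<Rightarrow> bool. restrict \<omega> S))"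
    by (rule finite_subset[of _ "PiE S (\<lambda>_. UNIV)"]) (auto simp: assms finite_PiE)
  then show ?thesis
    by (simp add: pin_space_def simple_function_def)
qed

lemma prob_restrict_pin_edges:
  "measure (pin_space E n) ((\<lambda>\<omega>. restrict \<omega> (pin_edges E n)) -` {restrict \<omega>' (pin_edges E n)})
    = (1/2) ^ card (pin_edges E n)"
proof -
  let ?D = "pin_edges E n"
  define P where "P = Pi_pmf ?D False (\<lambda>_. bernoulli_pmf (1/2))"
  define v where "v x = (if x \<in> ?D then \<omega>' x else False)" for x
  have finD: "finite ?D" by (simp add: pin_edges_def)
  have restrict_eq: "restrict \<omega> ?D = restrict \<omega>' ?D \<longleftrightarrow> (\<forall>x\<in>?D. \<omega> x = \<omega>' x)" for \<omega>
  proof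
    show "\<forall>x\<in>?D. \<omega> x = \<omega>' x" if "restrict \<omega> ?D = restrict \<omega>' ?D"
      using that by (metis restrict_apply')
  qed (rule restrict_ext, simp)
  have "measure (pin_space E n) ((\<lambda>\<omega>. restrict \<omega> ?D) -` {restrict \<omega>' ?D})
      = measure P ((\<lambda>\<omega>. restrict \<omega> ?D) -` {restrict \<omega>' ?D} \<inter> set_pmf P)"
    by (simp add: pin_space_def P_def measure_Int_set_pmf)
  also have "(\<lambda>\<omega>. restrict \<omega> ?D) -` {restrict \<omega>' ?D} \<inter> set_pmf P = {v}"
    by (auto simp: P_def set_Pi_pmf finD PiE_dflt_def v_def restrict_eq) (auto simp: fun_eq_iff v_def)
  also have "measure P {v} = pmf P v"
    by (rule measure_pmf_single)
  also have "\<dots> = (\<Prod>x\<in>?D. pmf (bernoulli_pmf (1/2)) (v x))"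
    unfolding P_def by (rule pmf_Pi'[OF finD]) (simp add: v_def)
  also have "\<dots> = (1/2) ^ card ?D"
    by simp
  finally show ?thesis .
qed

theorem lemma4:
  fixes m t n :: nat and E :: "nat set list"
    and g :: "(nat \<Rightarrow> (nat \<times> nat) \<Rightarrow> bool) \<Rightarrow> 'b" and L :: "((nat \<times> nat) \<Rightarrow> bool) \<Rightarrow> 'b"
  assumes "is_hypergraph m E"
    and "t_uniform t E"
    and "L = g \<circ> pin_XM E n m"
  shows "(\<Sum>i=1..m. prob_space.mutual_information (pin_space E n) 2
            (count_space (pin_X E n i ` space (pin_space E n)))
            (count_space (L ` space (pin_space E n)))
            (pin_X E n i) L)
         \<le> real t * prob_space.entropy (pin_space E n) 2
            (count_space (L ` space (pin_space E n))) L"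
proof -
  let ?D = "pin_edges E n" and ?A = "pin_incident E n"
  show ?thesis
    unfolding pin_X_eq_restrict
  proof (rule information_space.sum_mutual_information_uniform_bits_le
      [OF information_space_pin_space, where \<xi>="\<lambda>\<omega>. \<omega>" and D="?D" and f=L])
    show "finite ?D" by (simp add: pin_edges_def)
    then show "simple_function (pin_space E n) (\<lambda>\<omega>. restrict \<omega> S)" if "S \<subseteq> ?D" for S
      using that by (intro simple_function_pin_restrict finite_subset[of S ?D]) auto
    show "card {i \<in> {1..m}. d \<in> ?A i} = t" if "d \<in> ?D" for d
      using assms(1,2) that by (rule card_pin_incident)
    show "L \<omega> = L (restrict \<omega> ?D)" for \<omega>
      using assms(3) by (simp add: pin_XM_restrict_pin_edges)
  qed (auto simp: pin_incident_def prob_restrict_pin_edges)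
qed

end
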